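(* Consider the two-slab, three-element (periodic) space-time SBP scheme: unknowns $\boldsymbol\rho^{I},\boldsymbol g^{I}_k,\boldsymbol\rho^{II},\boldsymbol g^{II}_k$ ($k=1,\dots,n_v$) satisfying, for slab I, $$\mathsf D_t\boldsymbol\rho^{I}+\tilde{\mathsf D}_x\langle v\boldsymbol g^{I}\rangle=-\sigma_a\boldsymbol\rho^{I}-\mathsf H_t^{-1}\mathsf t_B\mathsf t_B^\top(\boldsymbol\rho^{I}-\boldsymbol\rho^{I}(0)),$$ $$\mathsf D_t\boldsymbol g^{I}_k+\tfrac{v_k}{\varepsilon}\tilde{\mathsf D}_x\boldsymbol g^{I}_k-\tfrac1\varepsilon\langle v\tilde{\mathsf D}_x\boldsymbol g^{I}\rangle+\tfrac{v_k}{\varepsilon^2}\tilde{\mathsf D}_x\boldsymbol\rho^{I}=-\Big(\tfrac{\sigma_s}{\varepsilon^2}+\sigma_a\Big)\boldsymbol g^{I}_k-\mathsf H_t^{-1}\mathsf t_B\mathsf t_B^\top(\boldsymbol g^{I}_k-\boldsymbol g^{I}_k(0)),$$ and for slab II the same equations with superscript $II$ and with the initial SAT terms replaced by $-\mathsf H_t^{-1}\mathsf t_B(\mathsf t_B^\top\boldsymbol\rho^{II}-\mathsf t_T^\top\boldsymbol\rho^{I})$ and $-\mathsf H_t^{-1}\mathsf t_B(\mathsf t_B^\top\boldsymbol g^{II}_k-\mathsf t_T^\top\boldsymbol g^{I}_k)$; the initial data satisfy $\langle\boldsymbol g^{I}(0)\rangle=0$. Then the scheme is stable: with $M_T=\bar{\boldsymbol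 t}_T\bar{\boldsymbol t}_T^\top\otimes\mathsf I_3\otimes\bar{\mathsf H}_x$ and $M_B=\bar{\boldsymbol t}_B\bar{\boldsymbol t}_B^\top\otimes\mathsf I_3\otimes\bar{\mathsf H}_x$, every solution satisfies $$\tfrac12(\boldsymbol\rho^{II})^\top M_T\boldsymbol\rho^{II}+\tfrac{\varepsilon^2}2\langle(\boldsymbol g^{II})^\top M_T\boldsymbol g^{II}\rangle\le\tfrac12\boldsymbol\rho^{I}(0)^\top M_B\boldsymbol\rho^{I}(0)+\tfrac{\varepsilon^2}2\langle\boldsymbol g^{I}(0)^\top M_B\boldsymbol g^{I}(0)\rangle.$$
   Context: SBP operators: $\bar{\mathsf D}=\bar{\mathsf H}^{-1}\bar{\mathsf Q}$ on nodes $x_0<\dots<x_n$ is a degree-$p$ SBP approximation of $d/dx$ if $\bar{\mathsf D}\boldsymbol x^k=k\boldsymbol x^{k-1}$ for $0\le k\le p$, $\bar{\mathsf H}$ is diagonal symmetric positive definite, and $\bar{\mathsf Q}+\bar{\mathsf Q}^\top=\bar{\mathsf E}=\bar{\boldsymbol t}_R\bar{\boldsymbol t}_R^\top-\bar{\boldsymbol t}_L\bar{\boldsymbol t}_L^\top=\mathrm{diag}(-1,0,\dots,0,1)$, $\bar{\boldsymbol t}_L,\bar{\boldsymbol t}_R$ first/last unit vectors. $\bar{\mathsf D}_x=\bar{\mathsf H}_x^{-1}\bar{\mathsf Q}_x$ on $n_x+1$ spatial nodes per element, $\bar{\mathsf S}_x=\bar{\mathsf Q}_x-\frac12\bar{\mathsf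 E}_x$; $\bar{\mathsf D}_t=\bar{\mathsf H}_t^{-1}\bar{\mathsf Q}_t$ on $n_t+1$ temporal nodes per slab, with first/last unit vectors $\bar{\boldsymbol t}_B,\bar{\boldsymbol t}_T$. $\tilde{\bar{\mathsf D}}^G_x=(\mathsf I_3\otimes\bar{\mathsf H}_x^{-1})\tilde{\bar{\mathsf Q}}^G_x$, with $\tilde{\bar{\mathsf Q}}^G_x$ the $3\times3$ block matrix with diagonal blocks $\bar{\mathsf S}_x$, blocks $(1,2),(2,3),(3,1)$ equal to $\frac12\bar{\boldsymbol t}_R\bar{\boldsymbol t}_L^\top$, blocks $(2,1),(3,2),(1,3)$ equal to $-\frac12\bar{\boldsymbol t}_L\bar{\boldsymbol t}_R^\top$. With identities $\mathsf I_{n_x},\mathsf I_{n_t}$ of sizes $n_x+1,n_t+1$: $\tilde{\mathsf D}_x=\mathsf I_{n_t}\otimes\tilde{\bar{\mathsf D}}^G_x$, $\mathsf D_t=\bar{\mathsf D}_t\otimes\mathsf I_3\otimes\mathsf I_{n_x}$, $\mathsf H_t=\bar{\mathsf H}_t\otimes\mathsf I_3\otimes\mathsf I_{n_x}$, $\mathsf t_B=\bar{\boldsymbol t}_B\otimes\mathsf I_3\otimes\mathsf I_{n_x}$, $\mathsf t_T=\bar{\boldsymbol t}_T\otimes\mathsf I_3\otimes\mathsf I_{n_x}$. Velocity nodes $v_k$, weights $\omega_k$ with $\sum\omega_k=1$, $\sum\omega_kv_k=0$; $\langle\boldsymbol a\rangle=\sum_k\omega_k\boldsymbol a_k$. $\varepsilon>0$,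 $\sigma_s>0$, $\sigma_a\ge0$; $\boldsymbol\rho^{I}(0),\boldsymbol g^{I}_k(0)$ given initial-data vectors. *)

theory Defs
  imports Complex_Main
begin

text \<open>A matrix of size (n+1)x(n+1) is a function nat => nat => real whose
  entries are only used for indices 0..n.  A grid function of slab length (n_t+1),
  three spatial elements and (n_x+1) spatial nodes per element is a function
  u :: nat => nat => nat => real, with u i e j the component at time node i (0..n_t),
  element e (0..2) and spatial node j (0..n_x).  This is exactly the index ordering
  of the Kronecker products (time) x (element, I_3) x (space).\<close>

text \<open>Boundary matrix E = t_R t_R^T - t_L t_L^T on nodes 0..n.\<close>
definition sbp_E :: "nat \<Rightarrow> nat \<Rightarrow> nat \<Rightarrow> real" where
  "sbp_E n i j = (if i = n \<and> j = n then 1 else 0) - (if i = 0 \<and> j = 0 then 1 else 0)"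

definition sbpD :: "(nat \<Rightarrow> nat \<Rightarrow> real) \<Rightarrow> (nat \<Rightarrow> nat \<Rightarrow> real) \<Rightarrow> nat \<Rightarrow> nat \<Rightarrow> real" where
  "sbpD H Q i j = Q i j / H i i"

definition is_SBP :: "nat \<Rightarrow> (nat \<Rightarrow> real) \<Rightarrow> nat \<Rightarrow> (nat \<Rightarrow> nat \<Rightarrow> real) \<Rightarrow> (nat \<Rightarrow> nat \<Rightarrow> real) \<Rightarrow> bool" where
  "is_SBP n x p H Q \<longleftrightarrow>
     1 \<le> n \<and>
     strict_mono_on {0..n} x \<and>
     (\<forall>i\<le>n. \<forall>j\<le>n. i \<noteq> j \<longrightarrow> H i j = 0) \<and>
     (\<forall>i\<le>n. 0 < H i i) \<and>
     (\<forall>i\<le>n. \<forall>j\<le>n. Q i j + Q j i = sbp_E n i j) \<and>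
     (\<forall>k\<le>p. \<forall>i\<le>n. (\<Sum>j\<le>n. sbpD H Q i j * x j ^ k) = of_nat k * x i ^ (k - 1))"

definition sbpS :: "nat \<Rightarrow> (nat \<Rightarrow> nat \<Rightarrow> real) \<Rightarrow> nat \<Rightarrow> nat \<Rightarrow> real" where
  "sbpS n Q i j = Q i j - sbp_E n i j / 2"

text \<open>The 3x3 block matrix tilde Q^G_x, entry ((e,j),(e',j')).\<close>
definition QG :: "nat \<Rightarrow> (nat \<Rightarrow> nat \<Rightarrow> real) \<Rightarrow> nat \<Rightarrow> nat \<Rightarrow> nat \<Rightarrow> nat \<Rightarrow> real" where
  "QG n Q e j e' j' =
     (if e' = e then sbpS n Q j j'
      else if e' = (e + 1) mod 3 then (if j = n \<and> j' = 0 then 1/2 else 0)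
      else if e' = (e + 2) mod 3 then (if j = 0 \<and> j' = n then - 1/2 else 0)
      else 0)"

text \<open>tilde D_x = I_{n_t} (x) (I_3 (x) H_x^{-1}) tilde Q^G_x applied to a grid function.\<close>
definition Dx_op :: "nat \<Rightarrow> (nat \<Rightarrow> nat \<Rightarrow> real) \<Rightarrow> (nat \<Rightarrow> nat \<Rightarrow> real) \<Rightarrow>
    (nat \<Rightarrow> nat \<Rightarrow> nat \<Rightarrow> real) \<Rightarrow> nat \<Rightarrow> nat \<Rightarrow> nat \<Rightarrow> real" where
  "Dx_op nx Hx Qx u i e j = (\<Sum>e'<3. \<Sum>j'\<le>nx. QG nx Qx e j e' j' * u i e' j') / Hx j j"

text \<open>D_t = D_t-bar (x) I_3 (x) I_{n_x} applied to a grid function.\<close>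
definition Dt_op :: "nat \<Rightarrow> (nat \<Rightarrow> nat \<Rightarrow> real) \<Rightarrow> (nat \<Rightarrow> nat \<Rightarrow> real) \<Rightarrow>
    (nat \<Rightarrow> nat \<Rightarrow> nat \<Rightarrow> real) \<Rightarrow> nat \<Rightarrow> nat \<Rightarrow> nat \<Rightarrow> real" where
  "Dt_op nt Ht Qt u i e j = (\<Sum>i'\<le>nt. sbpD Ht Qt i i' * u i' e j)"

text \<open>H_t^{-1} t_B y for a spatial vector y (indexed by element and node), where
  H_t = H_t-bar (x) I_3 (x) I_{n_x} is diagonal and t_B = t_B-bar (x) I_3 (x) I_{n_x}.\<close>
definition satB :: "(nat \<Rightarrow> nat \<Rightarrow> real) \<Rightarrow> (nat \<Rightarrow> nat \<Rightarrow> real) \<Rightarrow> nat \<Rightarrow> nat \<Rightarrow> nat \<Rightarrow> real" where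
  "satB Ht y i e j = (if i = 0 then y e j / Ht 0 0 else 0)"

definition tBT :: "(nat \<Rightarrow> nat \<Rightarrow> nat \<Rightarrow> real) \<Rightarrow> nat \<Rightarrow> nat \<Rightarrow> real" where
  "tBT u e j = u 0 e j"
definition tTT :: "nat \<Rightarrow> (nat \<Rightarrow> nat \<Rightarrow> nat \<Rightarrow> real) \<Rightarrow> nat \<Rightarrow> nat \<Rightarrow> real" where
  "tTT nt u e j = u nt e j"

text \<open>u^T M u with M = t t^T (x) I_3 (x) H_x-bar, where t is the unit vector of time node i0
  (i0 = n_t gives M_T, i0 = 0 gives M_B).\<close>
definition quadM :: "nat \<Rightarrow> (nat \<Rightarrow> nat \<Rightarrow> real) \<Rightarrow> nat \<Rightarrow> (nat \<Rightarrow> nat \<Rightarrow> nat \<Rightarrow> real) \<Rightarrow> real" where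
  "quadM nx Hx i0 u = (\<Sum>e<3. \<Sum>j\<le>nx. \<Sum>j'\<le>nx. u i0 e j * Hx j j' * u i0 e j')"

definition vavg :: "nat \<Rightarrow> (nat \<Rightarrow> real) \<Rightarrow> (nat \<Rightarrow> real) \<Rightarrow> real" where
  "vavg nv \<omega> a = (\<Sum>k=1..nv. \<omega> k * a k)"

end

theory Submission
  imports Defs
begin

(* Energy method.  Summation by parts turns u^T H_t D_t u into half the difference of the top
   and bottom energies of a slab, while the spatial operator with its interface couplings is
   skew-symmetric in the H_x inner product, so the streaming terms of the rho equation and the
   v-weighted average of the g equations cancel.  The SAT terms only dissipate, because
   |y|^2/2 - y.(y - z) <= |z|^2/2.  The coupling term <g><v D_x g> vanishes: averaging the g
   equations shows that <g> solves a damped problem with zero data, hence <g> = 0 (this is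
   also what makes the top of slab I admissible initial data for slab II).  Chaining the
   estimates of the two slabs gives the theorem. *)

lemma is_SBP_H_pos: "is_SBP n x p H Q \<Longrightarrow> i \<le> n \<Longrightarrow> 0 < H i i"
  by (simp add: is_SBP_def)

lemma is_SBP_H_offdiag: "is_SBP n x p H Q \<Longrightarrow> i \<le> n \<Longrightarrow> j \<le> n \<Longrightarrow> i \<noteq> j \<Longrightarrow> H i j = 0"
  by (simp add: is_SBP_def)

lemma is_SBP_Q_plus_transpose:
  "is_SBP n x p H Q \<Longrightarrow> i \<le> n \<Longrightarrow> j \<le> n \<Longrightarrow> Q i j + Q j i = sbp_E n i j"
  by (simp add: is_SBP_def)

lemma sbp_E_quadratic_form:
  fixes a :: "nat \<Rightarrow> real"
  shows "(\<Sum>i\<le>n. \<Sum>j\<le>n. a i * sbp_E n i j * a j) = (a n)\<^sup>2 - (a 0)\<^sup>2"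
proof -
  have "a i * sbp_E n i j * a j
      = (if j = n then if i = n then (a n)\<^sup>2 else 0 else 0)
      - (if j = 0 then if i = 0 then (a 0)\<^sup>2 else 0 else 0)" for i j
    by (simp add: sbp_E_def power2_eq_square)
  then show ?thesis
    by (simp add: sum_subtractf)
qed

lemma sbp_summation_by_parts:
  fixes a :: "nat \<Rightarrow> real"
  assumes SBP: "is_SBP n x p H Q"
  shows "(\<Sum>i\<le>n. H i i * a i * (\<Sum>j\<le>n. sbpD H Q i j * a j)) = ((a n)\<^sup>2 - (a 0)\<^sup>2) / 2"
proof -
  let ?s = "\<Sum>i\<le>n. \<Sum>j\<le>n. a i * Q i j * a j"
  have "(\<Sum>i\<le>n. H i i * a i * (\<Sum>j\<le>n. sbpD H Q i j * a j)) = ?s"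
  proof (rule sum.cong)
    fix i assume "i \<in> {..n}"
    then have "H i i \<noteq> 0"
      using is_SBP_H_pos[OF SBP, of i] by simp
    then show "H i i * a i * (\<Sum>j\<le>n. sbpD H Q i j * a j) = (\<Sum>j\<le>n. a i * Q i j * a j)"
      by (simp add: sbpD_def sum_distrib_left mult_ac)
  qed simp
  moreover have "2 * ?s = (\<Sum>i\<le>n. \<Sum>j\<le>n. a i * sbp_E n i j * a j)"
  proof -
    have "?s = (\<Sum>i\<le>n. \<Sum>j\<le>n. a j * Q j i * a i)"
      by (rule sum.swap)
    then have "2 * ?s = ?s + (\<Sum>i\<le>n. \<Sum>j\<le>n. a j * Q j i * a i)"
      by simp
    also have "\<dots> = (\<Sum>i\<le>n. \<Sum>j\<le>n. a i * (Q i j + Q j i) * a j)"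
      by (simp add: sum.distrib[symmetric] algebra_simps)
    also have "\<dots> = (\<Sum>i\<le>n. \<Sum>j\<le>n. a i * sbp_E n i j * a j)"
      by (simp add: is_SBP_Q_plus_transpose[OF SBP])
    finally show ?thesis .
  qed
  ultimately show ?thesis
    by (simp add: sbp_E_quadratic_form)
qed

lemma sbp_damped_sat_solution_zero:
  fixes a :: "nat \<Rightarrow> real"
  assumes SBP: "is_SBP n x p H Q" and c: "0 < c"
    and eq: "\<forall>i\<le>n. (\<Sum>j\<le>n. sbpD H Q i j * a j) = - c * a i - (if i = 0 then a 0 / H 0 0 else 0)"
    and i: "i \<le> n"
  shows "a i = 0"
proof -
  have H: "k \<le> n \<Longrightarrow> 0 < H k k" for k
    using is_SBP_H_pos[OF SBP] .
  let ?m = "\<Sum>k\<le>n. H k k * (a k)\<^sup>2"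
  have "(\<Sum>k\<le>n. H k k * a k * (\<Sum>j\<le>n. sbpD H Q k j * a j))
      = (\<Sum>k\<le>n. - c * (H k k * (a k)\<^sup>2) - (if k = 0 then (a 0)\<^sup>2 else 0))"
  proof (rule sum.cong)
    fix k assume "k \<in> {..n}"
    then have "H k k \<noteq> 0" and Da: "(\<Sum>j\<le>n. sbpD H Q k j * a j)
        = - c * a k - (if k = 0 then a 0 / H 0 0 else 0)"
      using H eq by (auto simp: less_imp_neq[symmetric])
    then show "H k k * a k * (\<Sum>j\<le>n. sbpD H Q k j * a j)
        = - c * (H k k * (a k)\<^sup>2) - (if k = 0 then (a 0)\<^sup>2 else 0)"
      unfolding Da by (cases "k = 0") (simp_all add: power2_eq_square field_simps)
  qed simp
  also have "\<dots> = - c * ?m - (a 0)\<^sup>2"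
    by (simp add: sum_subtractf sum_distrib_left)
  finally have "((a n)\<^sup>2 - (a 0)\<^sup>2) / 2 = - c * ?m - (a 0)\<^sup>2"
    by (simp only: sbp_summation_by_parts[OF SBP])
  then have "(a n)\<^sup>2 + (a 0)\<^sup>2 = - 2 * (c * ?m)"
    by (simp add: field_simps)
  then have "c * ?m \<le> 0"
    using zero_le_power2[of "a n"] zero_le_power2[of "a 0"] by linarith
  moreover have "0 \<le> ?m"
    using H by (intro sum_nonneg mult_nonneg_nonneg) (auto simp: less_imp_le)
  ultimately have "?m = 0"
    using c by (simp add: mult_le_0_iff)
  then have "H i i * (a i)\<^sup>2 = 0"
    using H i by (subst (asm) sum_nonneg_eq_0_iff) (auto simp: less_imp_le)
  then show ?thesis
    using H[OF i] by simp
qed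

lemma skew_form_antisym:
  fixes u w :: "'a \<Rightarrow> real"
  assumes "finite A" and skew: "\<And>p q. p \<in> A \<Longrightarrow> q \<in> A \<Longrightarrow> K p q = - K q p"
  shows "(\<Sum>p\<in>A. u p * (\<Sum>q\<in>A. K p q * w q)) + (\<Sum>p\<in>A. w p * (\<Sum>q\<in>A. K p q * u q)) = 0"
proof -
  have "(\<Sum>p\<in>A. w p * (\<Sum>q\<in>A. K p q * u q)) = (\<Sum>p\<in>A. \<Sum>q\<in>A. w p * K p q * u q)"
    by (simp add: sum_distrib_left mult.assoc)
  also have "\<dots> = (\<Sum>q\<in>A. \<Sum>p\<in>A. w p * K p q * u q)"
    by (rule sum.swap)
  also have "\<dots> = (\<Sum>q\<in>A. \<Sum>p\<in>A. - (u q * K q p * w p))"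
  proof (intro sum.cong refl)
    fix q p assume "q \<in> A" "p \<in> A"
    then show "w p * K p q * u q = - (u q * K q p * w p)"
      using skew[of p q] by simp
  qed
  also have "\<dots> = - (\<Sum>p\<in>A. u p * (\<Sum>q\<in>A. K p q * w q))"
    by (simp add: sum_distrib_left sum_negf mult.assoc)
  finally show ?thesis
    by simp
qed

lemma QG_skew:
  assumes SBP: "is_SBP n x p H Q"
    and "e < 3" "e' < 3" "j \<le> n" "j' \<le> n"
  shows "QG n Q e j e' j' = - QG n Q e' j' e j"
proof -
  have "Q j j' + Q j' j = sbp_E n j j'" "Q j' j + Q j j' = sbp_E n j' j"
    using assms by (simp_all add: is_SBP_Q_plus_transpose)
  then have "sbpS n Q j j' = - sbpS n Q j' j"
    by (auto simp: sbpS_def sbp_E_def)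
  moreover have "e = 0 \<or> e = 1 \<or> e = 2" "e' = 0 \<or> e' = 1 \<or> e' = 2"
    using \<open>e < 3\<close> \<open>e' < 3\<close> by auto
  ultimately show ?thesis
    by (elim disjE) (simp_all add: QG_def)
qed

(* spatial_inner nx Hx y z = y^T (I_3 (x) H_x) z and slab_inner nt nx Ht Hx u w =
   u^T (H_t (x) I_3 (x) H_x) w; only diagonal entries occur since SBP norms are diagonal. *)
definition spatial_inner :: "nat \<Rightarrow> (nat \<Rightarrow> nat \<Rightarrow> real) \<Rightarrow> (nat \<Rightarrow> nat \<Rightarrow> real) \<Rightarrow>
    (nat \<Rightarrow> nat \<Rightarrow> real) \<Rightarrow> real" where
  "spatial_inner nx Hx y z = (\<Sum>e<3. \<Sum>j\<le>nx. Hx j j * y e j * z e j)"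

lemma spatial_inner_self_nonneg:
  "(\<forall>j\<le>nx. 0 \<le> Hx j j) \<Longrightarrow> 0 \<le> spatial_inner nx Hx y y"
  unfolding spatial_inner_def by (intro sum_nonneg) (simp add: mult.assoc)

lemma spatial_inner_sat_dissipation:
  assumes "\<forall>j\<le>nx. 0 \<le> Hx j j"
  shows "1/2 * spatial_inner nx Hx y y - spatial_inner nx Hx y (\<lambda>e j. y e j - z e j)
       \<le> 1/2 * spatial_inner nx Hx z z"
proof -
  have "1/2 * spatial_inner nx Hx z z
        - (1/2 * spatial_inner nx Hx y y - spatial_inner nx Hx y (\<lambda>e j. y e j - z e j))
      = 1/2 * spatial_inner nx Hx (\<lambda>e j. y e j - z e j) (\<lambda>e j. y e j - z e j)"
    unfolding spatial_inner_def sum_distrib_left sum_subtractf[symmetric]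
    by (intro sum.cong refl) (simp add: field_simps)
  also have "\<dots> \<ge> 0"
    using spatial_inner_self_nonneg[where Hx = Hx, OF assms] by simp
  finally show ?thesis
    by simp
qed

lemma quadM_eq_spatial_inner:
  assumes "is_SBP nx x p Hx Qx"
  shows "quadM nx Hx i u = spatial_inner nx Hx (u i) (u i)"
proof -
  have "(\<Sum>j'\<le>nx. u i e j * Hx j j' * u i e j') = Hx j j * u i e j * u i e j" if "j \<le> nx" for e j
  proof -
    have "(\<Sum>j'\<le>nx. u i e j * Hx j j' * u i e j')
        = (\<Sum>j'\<le>nx. if j' = j then Hx j j * u i e j * u i e j else 0)"
      using that is_SBP_H_offdiag[OF assms] by (intro sum.cong refl) auto
    then show ?thesis
      using that by simp
  qed
  then show ?thesis
    by (simp add: quadM_def spatial_inner_def)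
qed

lemma Dx_op_skew:
  assumes SBP: "is_SBP nx x p Hx Qx"
  shows "spatial_inner nx Hx (u i) (\<lambda>e j. Dx_op nx Hx Qx w i e j)
       + spatial_inner nx Hx (w i) (\<lambda>e j. Dx_op nx Hx Qx u i e j) = 0"
proof -
  let ?A = "{..<3::nat} \<times> {..nx}"
  let ?K = "\<lambda>p q. QG nx Qx (fst p) (snd p) (fst q) (snd q)"
  have as_form: "spatial_inner nx Hx (a i) (\<lambda>e j. Dx_op nx Hx Qx b i e j)
      = (\<Sum>p\<in>?A. a i (fst p) (snd p) * (\<Sum>q\<in>?A. ?K p q * b i (fst q) (snd q)))" for a b
  proof -
    have "Hx j j \<noteq> 0" if "j \<le> nx" for j
      using is_SBP_H_pos[OF SBP that] by simp
    then have "spatial_inner nx Hx (a i) (\<lambda>e j. Dx_op nx Hx Qx b i e j)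
        = (\<Sum>e<3. \<Sum>j\<le>nx. a i e j * (\<Sum>e'<3. \<Sum>j'\<le>nx. QG nx Qx e j e' j' * b i e' j'))"
      by (simp add: spatial_inner_def Dx_op_def)
    then show ?thesis
      by (simp add: sum.cartesian_product case_prod_beta)
  qed
  show ?thesis
    unfolding as_form
    by (rule skew_form_antisym) (auto intro: QG_skew[OF SBP])
qed

definition slab_inner :: "nat \<Rightarrow> nat \<Rightarrow> (nat \<Rightarrow> nat \<Rightarrow> real) \<Rightarrow> (nat \<Rightarrow> nat \<Rightarrow> real) \<Rightarrow>
    (nat \<Rightarrow> nat \<Rightarrow> nat \<Rightarrow> real) \<Rightarrow> (nat \<Rightarrow> nat \<Rightarrow> nat \<Rightarrow> real) \<Rightarrow> real" where
  "slab_inner nt nx Ht Hx u w = (\<Sum>i\<le>nt. Ht i i * spatial_inner nx Hx (u i) (w i))"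

lemma slab_inner_cong:
  assumes "\<And>i e j. i \<le> nt \<Longrightarrow> e < 3 \<Longrightarrow> j \<le> nx \<Longrightarrow> u i e j = u' i e j"
    and "\<And>i e j. i \<le> nt \<Longrightarrow> e < 3 \<Longrightarrow> j \<le> nx \<Longrightarrow> w i e j = w' i e j"
  shows "slab_inner nt nx Ht Hx u w = slab_inner nt nx Ht Hx u' w'"
  unfolding slab_inner_def spatial_inner_def using assms by (intro sum.cong refl) auto

lemma slab_inner_add_right:
  "slab_inner nt nx Ht Hx u (\<lambda>i e j. w i e j + z i e j)
     = slab_inner nt nx Ht Hx u w + slab_inner nt nx Ht Hx u z"
  by (simp add: slab_inner_def spatial_inner_def sum.distrib distrib_left)

lemma slab_inner_diff_right:
  "slab_inner nt nx Ht Hx u (\<lambda>i e j. w i e j - z i e j)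
     = slab_inner nt nx Ht Hx u w - slab_inner nt nx Ht Hx u z"
  by (simp add: slab_inner_def spatial_inner_def sum_subtractf right_diff_distrib)

lemma slab_inner_scale_right:
  "slab_inner nt nx Ht Hx u (\<lambda>i e j. c * w i e j) = c * slab_inner nt nx Ht Hx u w"
  by (simp add: slab_inner_def spatial_inner_def sum_distrib_left mult_ac)

lemma slab_inner_scale_left:
  "slab_inner nt nx Ht Hx (\<lambda>i e j. c * u i e j) w = c * slab_inner nt nx Ht Hx u w"
  by (simp add: slab_inner_def spatial_inner_def sum_distrib_left mult_ac)

lemma slab_inner_self_nonneg:
  assumes "\<forall>i\<le>nt. 0 \<le> Ht i i" and "\<forall>j\<le>nx. 0 \<le> Hx j j"
  shows "0 \<le> slab_inner nt nx Ht Hx u u"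
  unfolding slab_inner_def using assms
  by (intro sum_nonneg mult_nonneg_nonneg spatial_inner_self_nonneg) auto

lemma slab_inner_Dt_op:
  assumes SBP: "is_SBP nt tn pt Ht Qt"
  shows "slab_inner nt nx Ht Hx u (Dt_op nt Ht Qt u)
       = (spatial_inner nx Hx (u nt) (u nt) - spatial_inner nx Hx (u 0) (u 0)) / 2"
proof -
  have "slab_inner nt nx Ht Hx u (Dt_op nt Ht Qt u)
      = (\<Sum>e<3. \<Sum>j\<le>nx. Hx j j *
           (\<Sum>i\<le>nt. Ht i i * u i e j * (\<Sum>i'\<le>nt. sbpD Ht Qt i i' * u i' e j)))"
    unfolding slab_inner_def spatial_inner_def Dt_op_def sum_distrib_left
    by (subst sum.swap, rule sum.cong, simp, subst sum.swap, simp add: mult_ac)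
  also have "\<dots> = (\<Sum>e<3. \<Sum>j\<le>nx. Hx j j * (((u nt e j)\<^sup>2 - (u 0 e j)\<^sup>2) / 2))"
    by (simp only: sbp_summation_by_parts[OF SBP])
  also have "\<dots> = (\<Sum>e<3. \<Sum>j\<le>nx. Hx j j * u nt e j * u nt e j / 2 - Hx j j * u 0 e j * u 0 e j / 2)"
    by (simp add: power2_eq_square right_diff_distrib diff_divide_distrib mult.assoc)
  also have "\<dots> = (spatial_inner nx Hx (u nt) (u nt) - spatial_inner nx Hx (u 0) (u 0)) / 2"
    by (simp add: spatial_inner_def sum_subtractf sum_divide_distrib diff_divide_distrib)
  finally show ?thesis .
qed

lemma slab_inner_Dx_op_skew:
  assumes "is_SBP nx x p Hx Qx"
  shows "slab_inner nt nx Ht Hx u (Dx_op nx Hx Qx w) + slab_inner nt nx Ht Hx w (Dx_op nx Hx Qx u) = 0"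
  using Dx_op_skew[OF assms]
  by (simp add: slab_inner_def sum.distrib[symmetric] distrib_left[symmetric])

lemma slab_inner_satB:
  assumes "Ht 0 0 \<noteq> 0"
  shows "slab_inner nt nx Ht Hx u (satB Ht y) = spatial_inner nx Hx (u 0) y"
proof -
  have "Ht i i * spatial_inner nx Hx (u i) (satB Ht y i)
      = (if i = 0 then spatial_inner nx Hx (u 0) y else 0)" for i
    using assms by (simp add: spatial_inner_def satB_def sum_divide_distrib[symmetric])
  then show ?thesis
    by (simp add: slab_inner_def)
qed

lemma vavg_cong: "(\<And>k. k \<in> {1..nv} \<Longrightarrow> f k = g k) \<Longrightarrow> vavg nv \<omega> f = vavg nv \<omega> g"
  unfolding vavg_def by (intro sum.cong refl) auto

lemma vavg_add: "vavg nv \<omega> (\<lambda>k. f k + g k) = vavg nv \<omega> f + vavg nv \<omega> g"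
  unfolding vavg_def by (simp add: sum.distrib distrib_left)

lemma vavg_diff: "vavg nv \<omega> (\<lambda>k. f k - g k) = vavg nv \<omega> f - vavg nv \<omega> g"
  unfolding vavg_def by (simp add: sum_subtractf right_diff_distrib)

lemma vavg_scale: "vavg nv \<omega> (\<lambda>k. c * f k) = c * vavg nv \<omega> f"
  unfolding vavg_def by (simp add: sum_distrib_left mult.left_commute)

lemma vavg_scale_right: "vavg nv \<omega> (\<lambda>k. f k * c) = vavg nv \<omega> f * c"
  unfolding vavg_def by (simp add: sum_distrib_right mult.assoc)

lemma vavg_divide: "vavg nv \<omega> (\<lambda>k. f k / c) = vavg nv \<omega> f / c"
  unfolding vavg_def by (simp add: sum_divide_distrib)

lemma vavg_const: "vavg nv \<omega> (\<lambda>k. c) = (\<Sum>k=1..nv. \<omega> k) * c"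
  unfolding vavg_def by (simp add: sum_distrib_right)

lemma vavg_mono:
  "(\<And>k. k \<in> {1..nv} \<Longrightarrow> 0 \<le> \<omega> k) \<Longrightarrow> (\<And>k. k \<in> {1..nv} \<Longrightarrow> f k \<le> g k)
    \<Longrightarrow> vavg nv \<omega> f \<le> vavg nv \<omega> g"
  unfolding vavg_def by (intro sum_mono mult_left_mono) auto

lemma vavg_Dt_op:
  "vavg nv \<omega> (\<lambda>k. Dt_op nt Ht Qt (g k) i e j)
     = Dt_op nt Ht Qt (\<lambda>i e j. vavg nv \<omega> (\<lambda>k. g k i e j)) i e j"
  unfolding vavg_def Dt_op_def sum_distrib_left by (subst sum.swap) (simp add: mult_ac)

lemma vavg_satB:
  "vavg nv \<omega> (\<lambda>k. satB Ht (y k) i e j) = satB Ht (\<lambda>e j. vavg nv \<omega> (\<lambda>k. y k e j)) i e j"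
  unfolding vavg_def satB_def by (simp add: sum_divide_distrib)

lemma vavg_slab_inner_left:
  "vavg nv \<omega> (\<lambda>k. a k * slab_inner nt nx Ht Hx (f k) z)
     = slab_inner nt nx Ht Hx (\<lambda>i e j. vavg nv \<omega> (\<lambda>k. a k * f k i e j)) z"
proof -
  have "vavg nv \<omega> (\<lambda>k. a k * slab_inner nt nx Ht Hx (f k) z)
      = (\<Sum>i\<le>nt. \<Sum>e<3. \<Sum>j\<le>nx. \<Sum>k=1..nv. Ht i i * Hx j j * (\<omega> k * a k * f k i e j) * z i e j)"
    unfolding vavg_def slab_inner_def spatial_inner_def sum_distrib_left
    by (subst sum.swap, rule sum.cong, simp, subst sum.swap, rule sum.cong, simp,
        subst sum.swap, simp add: mult_ac)
  also have "\<dots> = slab_inner nt nx Ht Hx (\<lambda>i e j. vavg nv \<omega> (\<lambda>k. a k * f k i e j)) z"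
    by (simp add: vavg_def slab_inner_def spatial_inner_def sum_distrib_left sum_distrib_right
        mult_ac)
  finally show ?thesis .
qed

lemma flux_average_zero:
  fixes \<rho> :: "nat \<Rightarrow> nat \<Rightarrow> nat \<Rightarrow> real" and g :: "nat \<Rightarrow> nat \<Rightarrow> nat \<Rightarrow> nat \<Rightarrow> real"
  assumes SBPt: "is_SBP nt tn pt Ht Qt"
    and w_sum: "(\<Sum>k=1..nv. \<omega> k) = 1"
    and w_mom: "(\<Sum>k=1..nv. \<omega> k * v k) = 0"
    and c: "0 < c"
    and gb_avg: "\<forall>e<3. \<forall>j\<le>nx. vavg nv \<omega> (\<lambda>k. gb k e j) = 0"
    and geq: "\<forall>k\<in>{1..nv}. \<forall>i\<le>nt. \<forall>e<3. \<forall>j\<le>nx.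
        Dt_op nt Ht Qt (g k) i e j
        + v k / \<epsilon> * Dx_op nx Hx Qx (g k) i e j
        - 1 / \<epsilon> * vavg nv \<omega> (\<lambda>k'. v k' * Dx_op nx Hx Qx (g k') i e j)
        + v k / \<epsilon>\<^sup>2 * Dx_op nx Hx Qx \<rho> i e j
        = - c * g k i e j
          - satB Ht (\<lambda>e j. g k 0 e j - gb k e j) i e j"
    and "i \<le> nt" "e < 3" "j \<le> nx"
  shows "vavg nv \<omega> (\<lambda>k. g k i e j) = 0"
proof -
  define a where "a = (\<lambda>i e j. vavg nv \<omega> (\<lambda>k. g k i e j))"
  \<comment> \<open>Averaged over k, the streaming terms cancel because <1> = 1 and <v> = 0.\<close>
  have a_eq: "Dt_op nt Ht Qt a i e j = - c * a i e j - satB Ht (\<lambda>e j. a 0 e j) i e j"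
    if "i \<le> nt" "e < 3" "j \<le> nx" for i e j
  proof -
    have "vavg nv \<omega> (\<lambda>k. Dt_op nt Ht Qt (g k) i e j
        + v k / \<epsilon> * Dx_op nx Hx Qx (g k) i e j
        - 1 / \<epsilon> * vavg nv \<omega> (\<lambda>k'. v k' * Dx_op nx Hx Qx (g k') i e j)
        + v k / \<epsilon>\<^sup>2 * Dx_op nx Hx Qx \<rho> i e j)
      = vavg nv \<omega> (\<lambda>k. - c * g k i e j
          - satB Ht (\<lambda>e j. g k 0 e j - gb k e j) i e j)"
      using geq that by (intro vavg_cong) blast
    from that gb_avg w_sum w_mom this show ?thesis
      unfolding a_def
      by (simp only: times_divide_eq_left vavg_add vavg_diff vavg_divide vavg_scale
          vavg_scale_right vavg_const vavg_Dt_op vavg_satB) (simp add: satB_def vavg_def)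
  qed
  have "a i e j = 0"
  proof (rule sbp_damped_sat_solution_zero[OF SBPt c _ \<open>i \<le> nt\<close>])
    show "\<forall>i\<le>nt. (\<Sum>i'\<le>nt. sbpD Ht Qt i i' * a i' e j)
        = - c * a i e j - (if i = 0 then a 0 e j / Ht 0 0 else 0)"
      using a_eq \<open>e < 3\<close> \<open>j \<le> nx\<close> by (auto simp: Dt_op_def satB_def)
  qed
  then show ?thesis
    unfolding a_def .
qed

lemma damped_sat_energy_bound:
  assumes SBPt: "is_SBP nt tn pt Ht Qt"
    and Hx: "\<forall>j\<le>nx. 0 \<le> Hx j j" and c: "0 \<le> c"
    and eq: "\<forall>i\<le>nt. \<forall>e<3. \<forall>j\<le>nx.
        Dt_op nt Ht Qt u i e j + L i e j = - c * u i e j - satB Ht (\<lambda>e j. u 0 e j - y e j) i e j"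
  shows "1/2 * spatial_inner nx Hx (u nt) (u nt) + slab_inner nt nx Ht Hx u L
       \<le> 1/2 * spatial_inner nx Hx y y"
proof -
  have Ht: "\<forall>i\<le>nt. 0 < Ht i i"
    using is_SBP_H_pos[OF SBPt] by simp
  have Ht0: "Ht 0 0 \<noteq> 0"
    using is_SBP_H_pos[OF SBPt, of 0] by simp
  have "slab_inner nt nx Ht Hx u (\<lambda>i e j. Dt_op nt Ht Qt u i e j + L i e j)
      = slab_inner nt nx Ht Hx u (\<lambda>i e j. - c * u i e j - satB Ht (\<lambda>e j. u 0 e j - y e j) i e j)"
    using eq by (intro slab_inner_cong) auto
  then have "1/2 * spatial_inner nx Hx (u nt) (u nt) + slab_inner nt nx Ht Hx u L
      = 1/2 * spatial_inner nx Hx (u 0) (u 0) - spatial_inner nx Hx (u 0) (\<lambda>e j. u 0 e j - y e j)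
        - c * slab_inner nt nx Ht Hx u u"
    by (simp only: slab_inner_add_right slab_inner_diff_right slab_inner_scale_right
        slab_inner_Dt_op[OF SBPt] slab_inner_satB[where Ht = Ht, OF Ht0]) (simp add: field_simps)
  moreover have "0 \<le> c * slab_inner nt nx Ht Hx u u"
    using c Ht Hx by (simp add: less_imp_le slab_inner_self_nonneg)
  ultimately show ?thesis
    using spatial_inner_sat_dissipation[where Hx = Hx, OF Hx, of "u 0" y] by linarith
qed

lemma vavg_streaming_cancel:
  fixes \<rho> :: "nat \<Rightarrow> nat \<Rightarrow> nat \<Rightarrow> real" and g :: "nat \<Rightarrow> nat \<Rightarrow> nat \<Rightarrow> nat \<Rightarrow> real"
  assumes SBPx: "is_SBP nx xn px Hx Qx"
    and avg_zero: "\<And>i e j. i \<le> nt \<Longrightarrow> e < 3 \<Longrightarrow> j \<le> nx \<Longrightarrow> vavg nv \<omega> (\<lambda>k. g k i e j) = 0"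
  shows "vavg nv \<omega> (\<lambda>k. slab_inner nt nx Ht Hx (g k) (\<lambda>i e j.
             v k / \<epsilon> * Dx_op nx Hx Qx (g k) i e j
           - 1 / \<epsilon> * vavg nv \<omega> (\<lambda>k'. v k' * Dx_op nx Hx Qx (g k') i e j)
           + v k / \<epsilon>\<^sup>2 * Dx_op nx Hx Qx \<rho> i e j))
       = - slab_inner nt nx Ht Hx \<rho> (Dx_op nx Hx Qx (\<lambda>i e j. vavg nv \<omega> (\<lambda>k. v k * g k i e j)))
           / \<epsilon>\<^sup>2"
proof -
  define w where "w = (\<lambda>i e j. vavg nv \<omega> (\<lambda>k. v k * g k i e j))"
  define V where "V = (\<lambda>i e j. vavg nv \<omega> (\<lambda>k. v k * Dx_op nx Hx Qx (g k) i e j))"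
  let ?S = "slab_inner nt nx Ht Hx"
  have "?S (g k) (\<lambda>i e j. v k / \<epsilon> * Dx_op nx Hx Qx (g k) i e j - 1 / \<epsilon> * V i e j
        + v k / \<epsilon>\<^sup>2 * Dx_op nx Hx Qx \<rho> i e j)
      = - 1 / \<epsilon> * ?S (g k) V + v k / \<epsilon>\<^sup>2 * ?S (g k) (Dx_op nx Hx Qx \<rho>)" for k
    using slab_inner_Dx_op_skew[OF SBPx, of nt Ht "g k" "g k"]
    by (simp only: slab_inner_add_right slab_inner_diff_right slab_inner_scale_right) simp
  then have "vavg nv \<omega> (\<lambda>k. ?S (g k) (\<lambda>i e j. v k / \<epsilon> * Dx_op nx Hx Qx (g k) i e j
        - 1 / \<epsilon> * V i e j + v k / \<epsilon>\<^sup>2 * Dx_op nx Hx Qx \<rho> i e j))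
      = ?S (\<lambda>i e j. vavg nv \<omega> (\<lambda>k. - 1 / \<epsilon> * g k i e j)) V
        + ?S (\<lambda>i e j. vavg nv \<omega> (\<lambda>k. v k / \<epsilon>\<^sup>2 * g k i e j)) (Dx_op nx Hx Qx \<rho>)"
    by (simp only: vavg_add vavg_slab_inner_left)
  also have "\<dots> = ?S (\<lambda>i e j. 0) V + ?S (\<lambda>i e j. 1 / \<epsilon>\<^sup>2 * w i e j) (Dx_op nx Hx Qx \<rho>)"
  proof -
    have "vavg nv \<omega> (\<lambda>k. - 1 / \<epsilon> * g k i e j) = 0" if "i \<le> nt" "e < 3" "j \<le> nx" for i e j
      using avg_zero[OF that] by (simp only: vavg_scale mult_zero_right)
    moreover have "vavg nv \<omega> (\<lambda>k. v k / \<epsilon>\<^sup>2 * g k i e j) = 1 / \<epsilon>\<^sup>2 * w i e j" for i e j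
      unfolding w_def by (simp add: times_divide_eq_left vavg_divide)
    ultimately show ?thesis
      by (intro arg_cong2[where f = "(+)"] slab_inner_cong) simp_all
  qed
  also have "\<dots> = - ?S \<rho> (Dx_op nx Hx Qx w) / \<epsilon>\<^sup>2"
  proof -
    have "?S (\<lambda>i e j. 0) V = 0"
      by (simp add: slab_inner_def spatial_inner_def)
    moreover have "?S w (Dx_op nx Hx Qx \<rho>) = - ?S \<rho> (Dx_op nx Hx Qx w)"
      using slab_inner_Dx_op_skew[OF SBPx, of nt Ht \<rho> w] by linarith
    ultimately show ?thesis
      by (simp only: slab_inner_scale_left) simp
  qed
  finally show ?thesis
    unfolding V_def w_def .
qed

lemma slab_stability:
  fixes \<rho> :: "nat \<Rightarrow> nat \<Rightarrow> nat \<Rightarrow> real" and g :: "nat \<Rightarrow> nat \<Rightarrow> nat \<Rightarrow> nat \<Rightarrow> real"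
  assumes SBPx: "is_SBP nx xn px Hx Qx"
    and SBPt: "is_SBP nt tn pt Ht Qt"
    and w_pos: "\<forall>k\<in>{1..nv}. 0 < \<omega> k"
    and w_sum: "(\<Sum>k=1..nv. \<omega> k) = 1"
    and w_mom: "(\<Sum>k=1..nv. \<omega> k * v k) = 0"
    and eps: "0 < \<epsilon>" and sig_s: "0 < \<sigma>s" and sig_a: "0 \<le> \<sigma>a"
    and gb_avg: "\<forall>e<3. \<forall>j\<le>nx. vavg nv \<omega> (\<lambda>k. gb k e j) = 0"
    and rho: "\<forall>i\<le>nt. \<forall>e<3. \<forall>j\<le>nx.
        Dt_op nt Ht Qt \<rho> i e j
        + Dx_op nx Hx Qx (\<lambda>i e j. vavg nv \<omega> (\<lambda>k. v k * g k i e j)) i e j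
        = - \<sigma>a * \<rho> i e j
          - satB Ht (\<lambda>e j. \<rho> 0 e j - \<rho>b e j) i e j"
    and geq: "\<forall>k\<in>{1..nv}. \<forall>i\<le>nt. \<forall>e<3. \<forall>j\<le>nx.
        Dt_op nt Ht Qt (g k) i e j
        + v k / \<epsilon> * Dx_op nx Hx Qx (g k) i e j
        - 1 / \<epsilon> * vavg nv \<omega> (\<lambda>k'. v k' * Dx_op nx Hx Qx (g k') i e j)
        + v k / \<epsilon>\<^sup>2 * Dx_op nx Hx Qx \<rho> i e j
        = - (\<sigma>s / \<epsilon>\<^sup>2 + \<sigma>a) * g k i e j
          - satB Ht (\<lambda>e j. g k 0 e j - gb k e j) i e j"
  shows "1/2 * spatial_inner nx Hx (\<rho> nt) (\<rho> nt)
           + \<epsilon>\<^sup>2 / 2 * vavg nv \<omega> (\<lambda>k. spatial_inner nx Hx (g k nt) (g k nt))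
         \<le> 1/2 * spatial_inner nx Hx \<rho>b \<rho>b
           + \<epsilon>\<^sup>2 / 2 * vavg nv \<omega> (\<lambda>k. spatial_inner nx Hx (gb k) (gb k))"
proof -
  have Hx: "\<forall>j\<le>nx. 0 \<le> Hx j j"
    using is_SBP_H_pos[OF SBPx] by (simp add: less_imp_le)
  have c: "0 < \<sigma>s / \<epsilon>\<^sup>2 + \<sigma>a"
    using eps sig_s sig_a by (simp add: add_pos_nonneg)
  define w where "w = (\<lambda>i e j. vavg nv \<omega> (\<lambda>k. v k * g k i e j))"
  define V where "V = (\<lambda>i e j. vavg nv \<omega> (\<lambda>k. v k * Dx_op nx Hx Qx (g k) i e j))"
  define L where "L k = (\<lambda>i e j. v k / \<epsilon> * Dx_op nx Hx Qx (g k) i e j - 1 / \<epsilon> * V i e j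
    + v k / \<epsilon>\<^sup>2 * Dx_op nx Hx Qx \<rho> i e j)" for k
  let ?S = "slab_inner nt nx Ht Hx"
  let ?E = "\<lambda>y. spatial_inner nx Hx y y"
  have rho_bound: "1/2 * ?E (\<rho> nt) + ?S \<rho> (Dx_op nx Hx Qx w) \<le> 1/2 * ?E \<rho>b"
    using rho unfolding w_def by (rule damped_sat_energy_bound[where Hx = Hx, OF SBPt Hx sig_a])
  have "1/2 * ?E (g k nt) + ?S (g k) (L k) \<le> 1/2 * ?E (gb k)" if k: "k \<in> {1..nv}" for k
  proof (rule damped_sat_energy_bound[where Hx = Hx, OF SBPt Hx less_imp_le[OF c]])
    show "\<forall>i\<le>nt. \<forall>e<3. \<forall>j\<le>nx. Dt_op nt Ht Qt (g k) i e j + L k i e j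
        = - (\<sigma>s / \<epsilon>\<^sup>2 + \<sigma>a) * g k i e j - satB Ht (\<lambda>e j. g k 0 e j - gb k e j) i e j"
      using geq k unfolding L_def V_def by (simp add: algebra_simps)
  qed
  then have "vavg nv \<omega> (\<lambda>k. 1/2 * ?E (g k nt) + ?S (g k) (L k)) \<le> vavg nv \<omega> (\<lambda>k. 1/2 * ?E (gb k))"
    using w_pos by (intro vavg_mono) (auto simp: less_imp_le)
  then have g_bound: "1/2 * vavg nv \<omega> (\<lambda>k. ?E (g k nt)) + vavg nv \<omega> (\<lambda>k. ?S (g k) (L k))
      \<le> 1/2 * vavg nv \<omega> (\<lambda>k. ?E (gb k))"
    by (simp only: vavg_add vavg_scale)
  have "vavg nv \<omega> (\<lambda>k. ?S (g k) (L k)) = - ?S \<rho> (Dx_op nx Hx Qx w) / \<epsilon>\<^sup>2"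
    unfolding L_def V_def w_def
    by (rule vavg_streaming_cancel[OF SBPx flux_average_zero[OF SBPt w_sum w_mom c gb_avg geq]])
  with g_bound have "1/2 * vavg nv \<omega> (\<lambda>k. ?E (g k nt)) - ?S \<rho> (Dx_op nx Hx Qx w) / \<epsilon>\<^sup>2
      \<le> 1/2 * vavg nv \<omega> (\<lambda>k. ?E (gb k))"
    by simp
  then have "\<epsilon>\<^sup>2 * (1/2 * vavg nv \<omega> (\<lambda>k. ?E (g k nt)) - ?S \<rho> (Dx_op nx Hx Qx w) / \<epsilon>\<^sup>2)
      \<le> \<epsilon>\<^sup>2 * (1/2 * vavg nv \<omega> (\<lambda>k. ?E (gb k)))"
    by (rule mult_left_mono) simp
  with rho_bound eps show ?thesis
    by (simp add: right_diff_distrib)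
qed

theorem theorem3p11:
  fixes nx nt nv px pt :: nat
    and xn tn :: "nat \<Rightarrow> real"
    and Hx Qx Ht Qt :: "nat \<Rightarrow> nat \<Rightarrow> real"
    and v \<omega> :: "nat \<Rightarrow> real"
    and \<epsilon> \<sigma>s \<sigma>a :: real
    and \<rho>1 \<rho>2 \<rho>10 :: "nat \<Rightarrow> nat \<Rightarrow> nat \<Rightarrow> real"
    and g1 g2 g10 :: "nat \<Rightarrow> nat \<Rightarrow> nat \<Rightarrow> nat \<Rightarrow> real"
  assumes SBPx: "is_SBP nx xn px Hx Qx"
    and SBPt: "is_SBP nt tn pt Ht Qt"
    and w_pos: "\<forall>k\<in>{1..nv}. 0 < \<omega> k"
    and w_sum: "(\<Sum>k=1..nv. \<omega> k) = 1"
    and w_mom: "(\<Sum>k=1..nv. \<omega> k * v k) = 0"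
    and eps: "0 < \<epsilon>" and sig_s: "0 < \<sigma>s" and sig_a: "0 \<le> \<sigma>a"
    and init_avg: "\<forall>i\<le>nt. \<forall>e<3. \<forall>j\<le>nx. vavg nv \<omega> (\<lambda>k. g10 k i e j) = 0"
    and rhoI: "\<forall>i\<le>nt. \<forall>e<3. \<forall>j\<le>nx.
        Dt_op nt Ht Qt \<rho>1 i e j
        + Dx_op nx Hx Qx (\<lambda>i e j. vavg nv \<omega> (\<lambda>k. v k * g1 k i e j)) i e j
        = - \<sigma>a * \<rho>1 i e j
          - satB Ht (\<lambda>e j. tBT \<rho>1 e j - tBT \<rho>10 e j) i e j"
    and gI: "\<forall>k\<in>{1..nv}. \<forall>i\<le>nt. \<forall>e<3. \<forall>j\<le>nx.
        Dt_op nt Ht Qt (g1 k) i e j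
        + v k / \<epsilon> * Dx_op nx Hx Qx (g1 k) i e j
        - 1 / \<epsilon> * vavg nv \<omega> (\<lambda>k'. v k' * Dx_op nx Hx Qx (g1 k') i e j)
        + v k / \<epsilon>\<^sup>2 * Dx_op nx Hx Qx \<rho>1 i e j
        = - (\<sigma>s / \<epsilon>\<^sup>2 + \<sigma>a) * g1 k i e j
          - satB Ht (\<lambda>e j. tBT (g1 k) e j - tBT (g10 k) e j) i e j"
    and rhoII: "\<forall>i\<le>nt. \<forall>e<3. \<forall>j\<le>nx.
        Dt_op nt Ht Qt \<rho>2 i e j
        + Dx_op nx Hx Qx (\<lambda>i e j. vavg nv \<omega> (\<lambda>k. v k * g2 k i e j)) i e j
        = - \<sigma>a * \<rho>2 i e j
          - satB Ht (\<lambda>e j. tBT \<rho>2 e j - tTT nt \<rho>1 e j) i e j"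
    and gII: "\<forall>k\<in>{1..nv}. \<forall>i\<le>nt. \<forall>e<3. \<forall>j\<le>nx.
        Dt_op nt Ht Qt (g2 k) i e j
        + v k / \<epsilon> * Dx_op nx Hx Qx (g2 k) i e j
        - 1 / \<epsilon> * vavg nv \<omega> (\<lambda>k'. v k' * Dx_op nx Hx Qx (g2 k') i e j)
        + v k / \<epsilon>\<^sup>2 * Dx_op nx Hx Qx \<rho>2 i e j
        = - (\<sigma>s / \<epsilon>\<^sup>2 + \<sigma>a) * g2 k i e j
          - satB Ht (\<lambda>e j. tBT (g2 k) e j - tTT nt (g1 k) e j) i e j"
  shows "1/2 * quadM nx Hx nt \<rho>2 + \<epsilon>\<^sup>2 / 2 * vavg nv \<omega> (\<lambda>k. quadM nx Hx nt (g2 k))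
         \<le> 1/2 * quadM nx Hx 0 \<rho>10 + \<epsilon>\<^sup>2 / 2 * vavg nv \<omega> (\<lambda>k. quadM nx Hx 0 (g10 k))"
proof -
  have c: "0 < \<sigma>s / \<epsilon>\<^sup>2 + \<sigma>a"
    using eps sig_s sig_a by (simp add: add_pos_nonneg)
  note slabI = rhoI[unfolded tBT_def] gI[unfolded tBT_def]
  note slabII = rhoII[unfolded tBT_def tTT_def] gII[unfolded tBT_def tTT_def]
  have "\<forall>e<3. \<forall>j\<le>nx. vavg nv \<omega> (\<lambda>k. g1 k nt e j) = 0"
    using flux_average_zero[OF SBPt w_sum w_mom c _ slabI(2)] init_avg by blast
  then have "1/2 * spatial_inner nx Hx (\<rho>2 nt) (\<rho>2 nt)
      + \<epsilon>\<^sup>2 / 2 * vavg nv \<omega> (\<lambda>k. spatial_inner nx Hx (g2 k nt) (g2 k nt))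
    \<le> 1/2 * spatial_inner nx Hx (\<rho>1 nt) (\<rho>1 nt)
      + \<epsilon>\<^sup>2 / 2 * vavg nv \<omega> (\<lambda>k. spatial_inner nx Hx (g1 k nt) (g1 k nt))"
    by (rule slab_stability[OF SBPx SBPt w_pos w_sum w_mom eps sig_s sig_a _ slabII])
  also have "\<dots> \<le> 1/2 * spatial_inner nx Hx (\<rho>10 0) (\<rho>10 0)
      + \<epsilon>\<^sup>2 / 2 * vavg nv \<omega> (\<lambda>k. spatial_inner nx Hx (g10 k 0) (g10 k 0))"
    using init_avg
    by (intro slab_stability[OF SBPx SBPt w_pos w_sum w_mom eps sig_s sig_a _ slabI]) simp
  finally show ?thesis
    by (simp only: quadM_eq_spatial_inner[OF SBPx])
qed

end
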